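(* Let $G$ be a DCG that contains $k$ pairwise vertex-disjoint cycles, each of length at least $3$. Then $|\mathrm{MEC}(G)|\ge 2^k$.
   Context: A DCG is a directed graph without self-loops (cycles allowed). A cycle of length $\ell$ is a sequence of distinct vertices $(v_1,\dots,v_\ell)$ with edges $v_i\to v_{i+1}$ for $i<\ell$ and $v_\ell\to v_1$. Markov equivalence: a path between $a\ne b$ is a sequence of vertices (repeats allowed) with a specified directed edge (either direction) between consecutive vertices; an internal vertex is a collider if both adjacent path-edges point into it; the path is active given $Z$ if every internal non-collider is outside $Z$ and every collider is in $Z$ or has a descendant (itself or a vertex reachable by a directed path) in $Z$; $a,b$ are d-separated given $Z$ if no active path exists; two graphs are Markov equivalent if they have the same d-separations. $\mathrm{MEC}(G)$ is the set of DCGs on the same vertex set Markov equivalent to $G$. *)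

theory Defs
  imports Main
begin

definition dcg :: "'a set \<Rightarrow> ('a \<times> 'a) set \<Rightarrow> bool" where
  "dcg V E \<longleftrightarrow> finite V \<and> E \<subseteq> V \<times> V \<and> (\<forall>v. (v, v) \<notin> E)"

definition is_cycle :: "('a \<times> 'a) set \<Rightarrow> 'a list \<Rightarrow> bool" where
  "is_cycle E c \<longleftrightarrow> c \<noteq> [] \<and> distinct c \<and>
     (\<forall>i. Suc i < length c \<longrightarrow> (c ! i, c ! Suc i) \<in> E) \<and>
     (last c, hd c) \<in> E"

text \<open>A path is a vertex list vs together with a direction list ds;
  ds ! i = True means the path-edge between vs!i and vs!(i+1) is vs!i -> vs!(i+1),
  False means vs!(i+1) -> vs!i.  Vertices may repeat.\<close>
definition is_path :: "('a \<times> 'a) set \<Rightarrow> 'a list \<Rightarrow> bool list \<Rightarrow> bool" where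
  "is_path E vs ds \<longleftrightarrow> length vs \<ge> 2 \<and> length ds = length vs - 1 \<and>
     (\<forall>i < length ds. (if ds ! i then (vs ! i, vs ! Suc i) \<in> E else (vs ! Suc i, vs ! i) \<in> E))"

text \<open>Internal vertex at position i (0 < i < length vs - 1) is a collider iff both adjacent path-edges point into it.\<close>
definition collider :: "'a list \<Rightarrow> bool list \<Rightarrow> nat \<Rightarrow> bool" where
  "collider vs ds i \<longleftrightarrow> ds ! (i - 1) \<and> \<not> ds ! i"

definition active_path :: "('a \<times> 'a) set \<Rightarrow> 'a set \<Rightarrow> 'a list \<Rightarrow> bool list \<Rightarrow> bool" where
  "active_path E Z vs ds \<longleftrightarrow> is_path E vs ds \<and>
     (\<forall>i. 0 < i \<and> Suc i < length vs \<longrightarrow>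
        (if collider vs ds i then (\<exists>z \<in> Z. (vs ! i, z) \<in> E\<^sup>*) else vs ! i \<notin> Z))"

definition d_separated :: "('a \<times> 'a) set \<Rightarrow> 'a \<Rightarrow> 'a \<Rightarrow> 'a set \<Rightarrow> bool" where
  "d_separated E a b Z \<longleftrightarrow>
     \<not> (\<exists>vs ds. active_path E Z vs ds \<and> hd vs = a \<and> last vs = b)"

definition markov_equiv :: "'a set \<Rightarrow> ('a \<times> 'a) set \<Rightarrow> ('a \<times> 'a) set \<Rightarrow> bool" where
  "markov_equiv V E E' \<longleftrightarrow>
     (\<forall>a \<in> V. \<forall>b \<in> V. \<forall>Z. a \<noteq> b \<and> Z \<subseteq> V \<longrightarrow>
        (d_separated E a b Z \<longleftrightarrow> d_separated E' a b Z))"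

definition MEC :: "'a set \<Rightarrow> ('a \<times> 'a) set \<Rightarrow> ('a \<times> 'a) set set" where
  "MEC V E = {E'. dcg V E' \<and> markov_equiv V E E'}"

end

theory Submission
  imports Defs
begin

text \<open>
  A path between \<open>a\<close> and \<open>b\<close> is active given \<open>Z\<close> iff \<open>a\<close> and \<open>b\<close> are joined, avoiding
  \<open>Z\<close>, in the moral graph of the subgraph induced on the ancestors of \<open>{a, b} \<union> Z\<close>. So two graphs with the same
  ancestor relation whose ancestral sets have the same moral graphs are Markov equivalent.
  The moral graph of an ancestral set only depends on its families (vertex plus parents),
  and an ancestral set meeting a strongly connected set \<open>S\<close> contains \<open>S\<close>; hence families
  inside \<open>S\<close> may be permuted, or shrunk into one another, freely.

  For a cycle \<open>c\<close> of length at least 3 this gives two modifications: reverse \<open>c\<close>, each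
  vertex inheriting the family of its successor; or, if that changes nothing (all vertices
  of \<open>c\<close> then share one family), delete the edge \<open>c ! 1 \<rightarrow> c ! 0\<close>. Either yields a
  different equivalent graph and changes only the edges into \<open>c\<close>, so for \<open>k\<close> disjoint
  cycles the \<open>2 ^ k\<close> choices of which ones to modify give distinct members of the class.
\<close>

section \<open>Active paths as walks\<close>

definition ancestors :: "('a \<times> 'a) set \<Rightarrow> 'a set \<Rightarrow> 'a set" where
  "ancestors E X = {x. \<exists>y\<in>X. (x, y) \<in> E\<^sup>*}"

lemma in_ancestorsI: "x \<in> X \<Longrightarrow> x \<in> ancestors E X"
  by (auto simp: ancestors_def)

lemma ancestors_rtrancl_closed: "(y, x) \<in> E\<^sup>* \<Longrightarrow> x \<in> ancestors E X \<Longrightarrow> y \<in> ancestors E X"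
  by (auto simp: ancestors_def intro: rtrancl_trans)

lemma ancestors_edge_closed: "(y, x) \<in> E \<Longrightarrow> x \<in> ancestors E X \<Longrightarrow> y \<in> ancestors E X"
  by (rule ancestors_rtrancl_closed) auto

lemma ancestors_mono: "X \<subseteq> Y \<Longrightarrow> ancestors E X \<subseteq> ancestors E Y"
  by (auto simp: ancestors_def)

lemma ancestors_subset_ancestors: "X \<subseteq> ancestors E Y \<Longrightarrow> ancestors E X \<subseteq> ancestors E Y"
  by (auto simp: ancestors_def intro: rtrancl_trans)

text \<open>\<open>d_connects E Z a u into\<close>: some path from \<open>a\<close> to \<open>u\<close> is active given \<open>Z\<close>, and
  its last edge points into \<open>u\<close> iff \<open>into\<close>.\<close>

inductive d_connects :: "('a \<times> 'a) set \<Rightarrow> 'a set \<Rightarrow> 'a \<Rightarrow> 'a \<Rightarrow> bool \<Rightarrow> bool"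
  for E Z a where
  edge_out: "(a, u) \<in> E \<Longrightarrow> d_connects E Z a u True"
| edge_in: "(u, a) \<in> E \<Longrightarrow> d_connects E Z a u False"
| forward: "d_connects E Z a u into \<Longrightarrow> u \<notin> Z \<Longrightarrow> (u, w) \<in> E \<Longrightarrow> d_connects E Z a w True"
| backward: "d_connects E Z a u into \<Longrightarrow> (w, u) \<in> E \<Longrightarrow>
    (if into then u \<in> ancestors E Z else u \<notin> Z) \<Longrightarrow> d_connects E Z a w False"

lemma active_path_prefix_d_connects:
  assumes path: "active_path E Z vs ds" and n: "Suc n < length vs"
  shows "d_connects E Z (vs ! 0) (vs ! Suc n) (ds ! n)"
  using n
proof (induction n)
  case 0
  with path show ?case
    by (cases "ds ! 0") (auto simp: active_path_def is_path_def intro: d_connects.intros)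
next
  case (Suc n)
  have IH: "d_connects E Z (vs ! 0) (vs ! Suc n) (ds ! n)"
    using Suc by simp
  have edge: "if ds ! Suc n then (vs ! Suc n, vs ! Suc (Suc n)) \<in> E
              else (vs ! Suc (Suc n), vs ! Suc n) \<in> E"
    using path Suc.prems by (auto simp: active_path_def is_path_def)
  have blocked: "if ds ! n \<and> \<not> ds ! Suc n then vs ! Suc n \<in> ancestors E Z else vs ! Suc n \<notin> Z"
    using path Suc.prems unfolding active_path_def
    by (auto simp: collider_def ancestors_def dest!: spec[of _ "Suc n"])
  show ?case
    using d_connects.forward[OF IH] d_connects.backward[OF IH] edge blocked
    by (cases "ds ! Suc n") auto
qed

lemma active_path_d_connects:
  assumes "active_path E Z vs ds"
  shows "d_connects E Z (hd vs) (last vs) (last ds)"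
proof -
  obtain n where n: "length vs = Suc (Suc n)" "length ds = Suc n"
    using assms by (auto simp: active_path_def is_path_def dest!: le_Suc_ex)
  then have "hd vs = vs ! 0" "last vs = vs ! Suc n" "last ds = ds ! n"
    by (simp_all add: hd_conv_nth last_conv_nth flip: length_greater_0_conv)
  then show ?thesis
    using active_path_prefix_d_connects[OF assms, of n] n by simp
qed

lemma active_path_snoc:
  assumes path: "active_path E Z vs ds"
    and edge: "if d then (last vs, w) \<in> E else (w, last vs) \<in> E"
    and blocked: "if last ds \<and> \<not> d then last vs \<in> ancestors E Z else last vs \<notin> Z"
  shows "active_path E Z (vs @ [w]) (ds @ [d])"
proof -
  obtain n where n: "length vs = Suc (Suc n)" "length ds = Suc n"
    using path by (auto simp: active_path_def is_path_def dest!: le_Suc_ex)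
  then have last: "last vs = vs ! Suc n" "last ds = ds ! n"
    by (simp_all add: last_conv_nth flip: length_greater_0_conv)
  have "is_path E (vs @ [w]) (ds @ [d])"
    using path edge n last
    by (auto simp: active_path_def is_path_def nth_append less_Suc_eq)
  moreover have "if collider (vs @ [w]) (ds @ [d]) i then \<exists>z\<in>Z. ((vs @ [w]) ! i, z) \<in> E\<^sup>*
                 else (vs @ [w]) ! i \<notin> Z"
    if i: "0 < i" "Suc i < length (vs @ [w])" for i
  proof (cases "i = Suc n")
    case True
    then have "collider (vs @ [w]) (ds @ [d]) i \<longleftrightarrow> last ds \<and> \<not> d"
      using n last by (simp add: collider_def nth_append)
    with True blocked n show ?thesis
      unfolding last ancestors_def by (auto simp: nth_append split: if_splits)
  next
    case False
    with i n have "Suc i < length vs"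
      by simp
    then have "collider (vs @ [w]) (ds @ [d]) i \<longleftrightarrow> collider vs ds i"
      using n by (auto simp: collider_def nth_append)
    moreover have "if collider vs ds i then \<exists>z\<in>Z. (vs ! i, z) \<in> E\<^sup>* else vs ! i \<notin> Z"
      using path \<open>Suc i < length vs\<close> i(1) unfolding active_path_def by blast
    ultimately show ?thesis
      using \<open>Suc i < length vs\<close> by (simp add: nth_append)
  qed
  ultimately show ?thesis
    unfolding active_path_def by simp
qed

lemma d_connects_active_path:
  "d_connects E Z a u into \<Longrightarrow>
    \<exists>vs ds. active_path E Z vs ds \<and> hd vs = a \<and> last vs = u \<and> last ds = into"
proof (induction rule: d_connects.induct)
  case (edge_out u)
  then have "active_path E Z [a, u] [True]"
    by (auto simp: active_path_def is_path_def)
  then show ?case by fastforce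
next
  case (edge_in u)
  then have "active_path E Z [a, u] [False]"
    by (auto simp: active_path_def is_path_def)
  then show ?case by fastforce
next
  case (forward u into w)
  then obtain vs ds where "active_path E Z vs ds" "hd vs = a" "last vs = u" "last ds = into"
    by blast
  moreover from this have "vs \<noteq> []"
    by (auto simp: active_path_def is_path_def)
  ultimately show ?case
    using forward active_path_snoc[of E Z vs ds True w]
    by (metis hd_append last_snoc)
next
  case (backward u into w)
  then obtain vs ds where "active_path E Z vs ds" "hd vs = a" "last vs = u" "last ds = into"
    by blast
  moreover from this have "vs \<noteq> []"
    by (auto simp: active_path_def is_path_def)
  ultimately show ?case
    using backward active_path_snoc[of E Z vs ds False w]
    by (metis hd_append last_snoc)
qed

lemma not_d_separated_iff_d_connects:
  "\<not> d_separated E a b Z \<longleftrightarrow> (\<exists>into. d_connects E Z a b into)"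
  unfolding d_separated_def
  using active_path_d_connects d_connects_active_path by metis

section \<open>The moralisation criterion\<close>

definition moral_adj :: "('a \<times> 'a) set \<Rightarrow> 'a set \<Rightarrow> 'a \<Rightarrow> 'a \<Rightarrow> bool" where
  "moral_adj E A x y \<longleftrightarrow>
     x \<noteq> y \<and> ((x, y) \<in> E \<or> (y, x) \<in> E \<or> (\<exists>c\<in>A. (x, c) \<in> E \<and> (y, c) \<in> E))"

text \<open>Paths from \<open>a\<close> in the moral graph of the subgraph induced on \<open>A\<close> whose inner
  vertices avoid \<open>Z\<close>.\<close>

inductive moral_reach :: "('a \<times> 'a) set \<Rightarrow> 'a set \<Rightarrow> 'a set \<Rightarrow> 'a \<Rightarrow> 'a \<Rightarrow> bool"
  for E Z A a where
  start: "moral_reach E Z A a a"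
| step: "moral_reach E Z A a u \<Longrightarrow> u = a \<or> u \<notin> Z \<Longrightarrow> moral_adj E A u w \<Longrightarrow> w \<in> A \<Longrightarrow>
    moral_reach E Z A a w"

lemma moral_reach_mono:
  assumes "moral_reach E Z A a x" "A \<subseteq> A'"
  shows "moral_reach E Z A' a x"
  using assms(1)
proof (induction rule: moral_reach.induct)
  case start
  then show ?case by (rule moral_reach.start)
next
  case (step u w)
  have "moral_adj E A' u w"
    using step.hyps(3) assms(2) unfolding moral_adj_def by blast
  moreover have "w \<in> A'"
    using step.hyps(4) assms(2) by blast
  ultimately show ?case
    by (rule moral_reach.step[OF step.IH step.hyps(2)])
qed

lemma moral_reach_edge:
  assumes "moral_reach E Z A a x" "x = a \<or> x \<notin> Z" "(x, u) \<in> E \<or> (u, x) \<in> E" "u \<in> A"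
    and "\<forall>v. (v, v) \<notin> E"
  shows "moral_reach E Z A a u"
proof -
  have "moral_adj E A x u"
    using assms(3,5) unfolding moral_adj_def by blast
  from assms(1,2) this assms(4) show ?thesis
    by (rule moral_reach.step)
qed

text \<open>When the walk enters \<open>u\<close> along an edge, \<open>u\<close> need not lie in the ancestral set
  built so far, so only a predecessor of \<open>u\<close> is required to be reached.\<close>

definition reached_in :: "('a \<times> 'a) set \<Rightarrow> 'a set \<Rightarrow> 'a set \<Rightarrow> 'a \<Rightarrow> 'a \<Rightarrow> bool \<Rightarrow> bool" where
  "reached_in E Z A a u into \<longleftrightarrow>
     (if into then \<exists>x. moral_reach E Z A a x \<and> (x = a \<or> x \<notin> Z) \<and> (x, u) \<in> E
      else moral_reach E Z A a u)"

lemma reached_in_mono: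
  assumes "reached_in E Z A a u into" "A \<subseteq> A'"
  shows "reached_in E Z A' a u into"
proof (cases into)
  case True
  with assms(1) obtain x where "moral_reach E Z A a x" "x = a \<or> x \<notin> Z" "(x, u) \<in> E"
    unfolding reached_in_def by auto
  with True moral_reach_mono[OF this(1) assms(2)] show ?thesis
    unfolding reached_in_def by auto
next
  case False
  with moral_reach_mono[of E Z A a u A'] assms show ?thesis
    unfolding reached_in_def by simp
qed

lemma reached_in_imp_moral_reach:
  assumes "reached_in E Z A a u into" "u \<in> A" "\<forall>v. (v, v) \<notin> E"
  shows "moral_reach E Z A a u"
proof (cases into)
  case True
  with assms(1) obtain x where "moral_reach E Z A a x" "x = a \<or> x \<notin> Z" "(x, u) \<in> E"
    unfolding reached_in_def by auto
  with assms(2,3) show ?thesis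
    by (intro moral_reach_edge[of E Z A a x u]) auto
next
  case False
  with assms(1) show ?thesis
    unfolding reached_in_def by simp
qed

lemma reached_in_backward_step:
  assumes "reached_in E Z A a u into" "(w, u) \<in> E" "u \<in> A" "w \<in> A" "\<not> into \<longrightarrow> u \<notin> Z"
    and irrefl: "\<forall>v. (v, v) \<notin> E"
  shows "moral_reach E Z A a w"
proof (cases into)
  case False
  with assms(1,5) have "moral_reach E Z A a u" "u \<notin> Z"
    unfolding reached_in_def by simp_all
  with assms(2,4) irrefl show ?thesis
    by (intro moral_reach_edge[of E Z A a u w]) auto
next
  case True
  with assms(1) obtain x where x: "moral_reach E Z A a x" "x = a \<or> x \<notin> Z" "(x, u) \<in> E"
    unfolding reached_in_def by auto
  show ?thesis
  proof (cases "x = w")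
    case True
    with x(1) show ?thesis
      by simp
  next
    case False
    with x(3) assms(2,3) have "moral_adj E A x w"
      unfolding moral_adj_def by blast
    from x(1,2) this assms(4) show ?thesis
      by (rule moral_reach.step)
  qed
qed

lemma d_connects_out_imp_ancestor:
  "d_connects E Z a u into \<Longrightarrow> \<not> into \<Longrightarrow> u \<in> ancestors E ({a} \<union> Z)"
proof (induction rule: d_connects.induct)
  case (edge_out u)
  then show ?case by simp
next
  case (edge_in u)
  show ?case
    by (rule ancestors_edge_closed[OF edge_in.hyps]) (simp add: ancestors_def)
next
  case (forward u into w)
  then show ?case by simp
next
  case (backward u into w)
  have "u \<in> ancestors E ({a} \<union> Z)"
    using backward.IH backward.hyps(3) by (cases into) (auto simp: ancestors_def)
  then show ?case
    by (rule ancestors_edge_closed[OF backward.hyps(2)])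
qed

lemma d_connects_imp_reached_in:
  assumes irrefl: "\<forall>v. (v, v) \<notin> E"
  shows "d_connects E Z a u into \<Longrightarrow>
    reached_in E Z (ancestors E ({a} \<union> Z) \<union> ancestors E {u}) a u into"
proof (induction rule: d_connects.induct)
  case (edge_out u)
  then show ?case
    unfolding reached_in_def by (auto intro: moral_reach.start)
next
  case (edge_in u)
  have "u \<in> ancestors E {u}"
    by (simp add: in_ancestorsI)
  with edge_in have "moral_reach E Z (ancestors E ({a} \<union> Z) \<union> ancestors E {u}) a u"
    by (intro moral_reach_edge[OF moral_reach.start _ _ _ irrefl]) auto
  then show ?case
    unfolding reached_in_def by simp
next
  case (forward u into w)
  let ?B = "ancestors E ({a} \<union> Z) \<union> ancestors E {w}"
  have "u \<in> ancestors E {w}"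
    by (rule ancestors_edge_closed[OF forward.hyps(3)]) (simp add: ancestors_def)
  then have "ancestors E ({a} \<union> Z) \<union> ancestors E {u} \<subseteq> ?B"
    using ancestors_subset_ancestors[of "{u}" E "{w}"] by auto
  with forward.IH have "reached_in E Z ?B a u into"
    by (rule reached_in_mono)
  then have "moral_reach E Z ?B a u"
    by (rule reached_in_imp_moral_reach) (use \<open>u \<in> ancestors E {w}\<close> irrefl in auto)
  with forward.hyps(2,3) show ?case
    unfolding reached_in_def by auto
next
  case (backward u into w)
  let ?A = "ancestors E ({a} \<union> Z)"
  have u: "u \<in> ?A"
    using d_connects_out_imp_ancestor[OF backward.hyps(1)] backward.hyps(3)
    by (cases into) (auto simp: ancestors_def)
  then have w: "w \<in> ?A"
    by (rule ancestors_edge_closed[OF backward.hyps(2)])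
  have "?A \<union> ancestors E {u} \<subseteq> ?A \<union> ancestors E {w}"
    using u ancestors_subset_ancestors[of "{u}" E "{a} \<union> Z"] by auto
  with backward.IH have reached: "reached_in E Z (?A \<union> ancestors E {w}) a u into"
    by (rule reached_in_mono)
  have "moral_reach E Z (?A \<union> ancestors E {w}) a w"
    by (rule reached_in_backward_step[OF reached backward.hyps(2) _ _ _ irrefl])
      (use u w backward.hyps(3) in auto)
  then show ?case
    unfolding reached_in_def by simp
qed

lemma d_connects_imp_moral_reach:
  assumes irrefl: "\<forall>v. (v, v) \<notin> E" and conn: "d_connects E Z a b into"
  shows "moral_reach E Z (ancestors E ({a, b} \<union> Z)) a b"
proof (rule reached_in_imp_moral_reach[OF reached_in_mono _ irrefl])
  show "reached_in E Z (ancestors E ({a} \<union> Z) \<union> ancestors E {b}) a b into"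
    by (rule d_connects_imp_reached_in[OF irrefl conn])
  show "ancestors E ({a} \<union> Z) \<union> ancestors E {b} \<subseteq> ancestors E ({a, b} \<union> Z)"
    using ancestors_mono[of "{a} \<union> Z" "{a, b} \<union> Z" E] ancestors_mono[of "{b}" "{a, b} \<union> Z" E]
    by blast
  show "b \<in> ancestors E ({a, b} \<union> Z)"
    by (simp add: in_ancestorsI)
qed

lemma d_connects_from_ancestor_of_start:
  assumes "(y, a) \<in> E\<^sup>*" "y \<notin> ancestors E Z"
  shows "y = a \<or> d_connects E Z a y False"
  using assms
proof (induction rule: converse_rtrancl_induct)
  case base
  then show ?case by simp
next
  case (step y y')
  have "y' \<notin> ancestors E Z"
    using ancestors_edge_closed[OF step.hyps(1)] step.prems by blast
  then have "y' \<notin> Z"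
    by (blast intro: in_ancestorsI)
  from step.IH[OF \<open>y' \<notin> ancestors E Z\<close>] show ?case
  proof
    assume "y' = a"
    then show ?thesis
      using d_connects.edge_in[OF step.hyps(1)] by simp
  next
    assume "d_connects E Z a y' False"
    then show ?thesis
      using d_connects.backward[OF _ step.hyps(1)] \<open>y' \<notin> Z\<close> by simp
  qed
qed

lemma d_connects_to_descendant:
  assumes "(y, b) \<in> E\<^sup>*" "y \<notin> ancestors E Z" "a \<noteq> b" "y = a \<or> d_connects E Z a y into"
  shows "\<exists>into'. d_connects E Z a b into'"
  using assms(1,2,4)
proof (induction arbitrary: into rule: converse_rtrancl_induct)
  case base
  then show ?case
    using assms(3) by blast
next
  case (step y y')
  have "y \<notin> Z"
    using step.prems(1) by (blast intro: in_ancestorsI)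
  have "d_connects E Z a y' True"
    using step.prems(2)
  proof
    assume "y = a"
    then show ?thesis
      using d_connects.edge_out[OF step.hyps(1)] by simp
  next
    assume "d_connects E Z a y into"
    then show ?thesis
      using \<open>y \<notin> Z\<close> step.hyps(1) by (rule d_connects.forward)
  qed
  moreover have "y' \<notin> ancestors E Z"
    using ancestors_edge_closed[OF step.hyps(1)] step.prems(1) by blast
  ultimately show ?case
    using step.IH by blast
qed

text \<open>Unless \<open>c\<close> is an ancestor of \<open>Z\<close>, some directed path from \<open>c\<close> to \<open>a\<close> or to \<open>b\<close>
  avoids \<open>Z\<close>: towards \<open>b\<close> it extends the walk to \<open>b\<close>, towards \<open>a\<close> it reaches \<open>c\<close> from
  \<open>a\<close> against the edges.\<close>

lemma d_connects_into_cases: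
  assumes "d_connects E Z a c True" "c \<in> ancestors E ({a, b} \<union> Z)" "a \<noteq> b"
    and "\<nexists>into. d_connects E Z a b into"
  shows "c \<in> ancestors E Z \<or> c = a \<or> (c \<notin> Z \<and> d_connects E Z a c False)"
proof (rule ccontr)
  assume contra: "\<not> ?thesis"
  then have c: "c \<notin> ancestors E Z" "c \<noteq> a"
    by auto
  then have "c \<notin> Z"
    by (blast intro: in_ancestorsI)
  from assms(2) c obtain y where "y = a \<or> y = b" "(c, y) \<in> E\<^sup>*"
    by (auto simp: ancestors_def)
  then consider "(c, a) \<in> E\<^sup>*" | "(c, b) \<in> E\<^sup>*"
    by blast
  then show False
  proof cases
    case 1
    then show False
      using d_connects_from_ancestor_of_start[OF 1 c(1)] c \<open>c \<notin> Z\<close> contra by blast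
  next
    case 2
    then show False
      using d_connects_to_descendant[OF 2 c(1) assms(3)] assms(1,4) by blast
  qed
qed

lemma d_connects_extend:
  assumes "u = a \<or> u \<notin> Z"
    and "u = a \<or> d_connects E Z a u False \<or> (d_connects E Z a u True \<and> u \<in> ancestors E Z)"
  shows "(u, y) \<in> E \<Longrightarrow> d_connects E Z a y True"
    and "(y, u) \<in> E \<Longrightarrow> d_connects E Z a y False"
proof -
  assume edge: "(u, y) \<in> E"
  show "d_connects E Z a y True"
  proof (cases "u = a")
    case True
    with edge show ?thesis
      by (simp add: d_connects.edge_out)
  next
    case False
    with assms obtain into where "d_connects E Z a u into" "u \<notin> Z"
      by blast
    from this edge show ?thesis
      by (rule d_connects.forward)
  qed
next
  assume edge: "(y, u) \<in> E"
  show "d_connects E Z a y False"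
  proof (cases "u = a")
    case True
    with edge show ?thesis
      by (simp add: d_connects.edge_in)
  next
    case False
    with assms obtain into where "d_connects E Z a u into"
      "if into then u \<in> ancestors E Z else u \<notin> Z"
      by fastforce
    from this(1) edge this(2) show ?thesis
      by (rule d_connects.backward)
  qed
qed

text \<open>If no walk reaches \<open>b\<close>, every vertex on a moral path is reached by a walk that
  can be continued along any edge at that vertex; see \<open>d_connects_extend\<close>.\<close>

lemma moral_reach_imp_d_connects_gen:
  assumes "a \<noteq> b" "\<nexists>into. d_connects E Z a b into"
  shows "moral_reach E Z (ancestors E ({a, b} \<union> Z)) a u \<Longrightarrow>
    u = a \<or> d_connects E Z a u False \<or> (d_connects E Z a u True \<and> u \<in> ancestors E Z)"
proof (induction rule: moral_reach.induct)
  case start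
  then show ?case by simp
next
  case (step u w)
  note extend = d_connects_extend[OF step.hyps(2) step.IH]
  from step.hyps(3) consider (out) "(u, w) \<in> E" | (into) "(w, u) \<in> E"
    | (collider) c where "c \<in> ancestors E ({a, b} \<union> Z)" "(u, c) \<in> E" "(w, c) \<in> E"
    unfolding moral_adj_def by blast
  then show ?case
  proof cases
    case out
    then have "d_connects E Z a w True"
      by (rule extend(1))
    with d_connects_into_cases[OF this step.hyps(4) assms] show ?thesis
      by blast
  next
    case into
    then show ?thesis
      using extend(2) by blast
  next
    case collider
    then have c: "d_connects E Z a c True"
      using extend(1) by blast
    from d_connects_into_cases[OF c collider(1) assms] show ?thesis
    proof (elim disjE conjE)
      assume "c \<in> ancestors E Z"
      with c collider(3) show ?thesis
        using d_connects.backward[of E Z a c True w] by simp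
    next
      assume "c = a"
      with collider(3) show ?thesis
        by (simp add: d_connects.edge_in)
    next
      assume "c \<notin> Z" "d_connects E Z a c False"
      with collider(3) show ?thesis
        using d_connects.backward[of E Z a c False w] by simp
    qed
  qed
qed

lemma moral_reach_imp_d_connects:
  assumes "a \<noteq> b" "moral_reach E Z (ancestors E ({a, b} \<union> Z)) a b"
  shows "\<exists>into. d_connects E Z a b into"
  using moral_reach_imp_d_connects_gen[OF assms(1) _ assms(2)] assms(1) by blast

lemma not_d_separated_iff_moral_reach:
  assumes "\<forall>v. (v, v) \<notin> E" "a \<noteq> b"
  shows "\<not> d_separated E a b Z \<longleftrightarrow> moral_reach E Z (ancestors E ({a, b} \<union> Z)) a b"
  using not_d_separated_iff_d_connects[of E a b Z] d_connects_imp_moral_reach[OF assms(1), of Z a b]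
    moral_reach_imp_d_connects[OF assms(2), of E Z] by blast

lemma moral_reach_transfer:
  assumes "moral_reach E Z A a u" "a \<in> A"
    and "\<forall>x\<in>A. \<forall>y\<in>A. moral_adj E A x y \<longrightarrow> moral_adj F A x y"
  shows "moral_reach F Z A a u"
  using assms(1)
proof (induction rule: moral_reach.induct)
  case start
  show ?case by (rule moral_reach.start)
next
  case (step u w)
  have "u \<in> A"
    using step.hyps(1) assms(2) by (cases rule: moral_reach.cases) auto
  with assms(3) step.hyps(3,4) have "moral_adj F A u w"
    by blast
  from step.IH step.hyps(2) this step.hyps(4) show ?case
    by (rule moral_reach.step)
qed

lemma d_separated_eq_if_moral_adj_eq:
  assumes "\<forall>v. (v, v) \<notin> E" "\<forall>v. (v, v) \<notin> F" "E\<^sup>* = F\<^sup>*"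
    and "\<forall>X. \<forall>x\<in>ancestors E X. \<forall>y\<in>ancestors E X.
           moral_adj E (ancestors E X) x y \<longleftrightarrow> moral_adj F (ancestors E X) x y"
    and "a \<noteq> b"
  shows "d_separated E a b Z \<longleftrightarrow> d_separated F a b Z"
proof -
  let ?A = "ancestors E ({a, b} \<union> Z)"
  have same_ancestors: "ancestors F X = ancestors E X" for X
    using assms(3) by (simp add: ancestors_def)
  have "a \<in> ?A"
    by (simp add: in_ancestorsI)
  then have "moral_reach E Z ?A a b \<longleftrightarrow> moral_reach F Z ?A a b"
    using moral_reach_transfer[of E Z ?A a b F] moral_reach_transfer[of F Z ?A a b E] assms(4)
    by blast
  then show ?thesis
    using not_d_separated_iff_moral_reach[OF assms(1,5), of Z]
      not_d_separated_iff_moral_reach[OF assms(2,5), of Z]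
    unfolding same_ancestors by blast
qed

section \<open>Equivalence through families\<close>

definition family :: "('a \<times> 'a) set \<Rightarrow> 'a \<Rightarrow> 'a set" where
  "family G v = insert v {x. (x, v) \<in> G}"

lemma moral_adj_iff_family:
  assumes "x \<in> A" "y \<in> A"
  shows "moral_adj E A x y \<longleftrightarrow> x \<noteq> y \<and> (\<exists>c\<in>A. x \<in> family E c \<and> y \<in> family E c)"
  using assms unfolding moral_adj_def family_def by blast

lemma common_family_transfer:
  assumes "\<forall>y. y \<notin> S \<longrightarrow> family F y = family G y"
    and "\<forall>y\<in>S. \<exists>y'\<in>S. family G y \<subseteq> family F y'"
    and "c \<in> A" "c \<in> S \<Longrightarrow> S \<subseteq> A" "x \<in> family G c" "y \<in> family G c"
  shows "\<exists>c'\<in>A. x \<in> family F c' \<and> y \<in> family F c'"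
proof (cases "c \<in> S")
  case False
  with assms(1,3,5,6) show ?thesis
    by metis
next
  case True
  with assms(2) obtain c' where "c' \<in> S" "family G c \<subseteq> family F c'"
    by blast
  with True assms(4-6) show ?thesis
    by blast
qed

lemma moral_adj_eq_if_families_correspond:
  assumes outside: "\<forall>y. y \<notin> S \<longrightarrow> family F y = family G y"
    and cover_GF: "\<forall>y\<in>S. \<exists>y'\<in>S. family G y \<subseteq> family F y'"
    and cover_FG: "\<forall>y\<in>S. \<exists>y'\<in>S. family F y \<subseteq> family G y'"
    and strong: "\<forall>u\<in>S. \<forall>v\<in>S. (u, v) \<in> G\<^sup>*"
  shows "\<forall>x\<in>ancestors G X. \<forall>y\<in>ancestors G X.
           moral_adj G (ancestors G X) x y \<longleftrightarrow> moral_adj F (ancestors G X) x y"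
proof (intro ballI)
  fix x y
  assume xy: "x \<in> ancestors G X" "y \<in> ancestors G X"
  let ?A = "ancestors G X"
  have S: "S \<subseteq> ?A" if "c \<in> ?A" "c \<in> S" for c
    using ancestors_rtrancl_closed[OF _ that(1)] strong that(2) by blast
  have outside': "\<forall>y. y \<notin> S \<longrightarrow> family G y = family F y"
    using outside by simp
  have "(\<exists>c\<in>?A. x \<in> family G c \<and> y \<in> family G c) \<longleftrightarrow>
        (\<exists>c\<in>?A. x \<in> family F c \<and> y \<in> family F c)"
    using common_family_transfer[OF outside cover_GF _ S] common_family_transfer[OF outside' cover_FG _ S]
    by blast
  then show "moral_adj G ?A x y \<longleftrightarrow> moral_adj F ?A x y"
    by (simp add: moral_adj_iff_family[OF xy])
qed

lemma markov_equiv_if_families_correspond: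
  assumes "dcg V G" "dcg V F"
    and "\<forall>y. y \<notin> S \<longrightarrow> family F y = family G y"
    and "\<forall>y\<in>S. \<exists>y'\<in>S. family G y \<subseteq> family F y'"
    and "\<forall>y\<in>S. \<exists>y'\<in>S. family F y \<subseteq> family G y'"
    and "\<forall>u\<in>S. \<forall>v\<in>S. (u, v) \<in> G\<^sup>*"
    and "F\<^sup>* = G\<^sup>*"
  shows "markov_equiv V G F"
proof -
  have "\<forall>v. (v, v) \<notin> G" "\<forall>v. (v, v) \<notin> F"
    using assms(1,2) by (auto simp: dcg_def)
  with assms(7) show ?thesis
    unfolding markov_equiv_def
    using d_separated_eq_if_moral_adj_eq moral_adj_eq_if_families_correspond[OF assms(3-6)]
    by metis
qed

section \<open>Reversing a cycle\<close>

definition cycle_edges :: "'a list \<Rightarrow> ('a \<times> 'a) set" where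
  "cycle_edges c = {(c ! i, c ! (Suc i mod length c)) | i. i < length c}"

lemma cycle_edges_subset:
  assumes "is_cycle G c"
  shows "cycle_edges c \<subseteq> G"
proof
  fix p
  assume "p \<in> cycle_edges c"
  then obtain i where i: "i < length c" "p = (c ! i, c ! (Suc i mod length c))"
    by (auto simp: cycle_edges_def)
  show "p \<in> G"
  proof (cases "Suc i < length c")
    case True
    with assms i show ?thesis
      by (auto simp: is_cycle_def)
  next
    case False
    with i have "Suc i = length c" "c \<noteq> []"
      by auto
    then have "c ! i = last c" "c ! (Suc i mod length c) = hd c"
      by (simp_all add: last_conv_nth hd_conv_nth flip: \<open>Suc i = length c\<close>)
    with assms i show ?thesis
      by (auto simp: is_cycle_def)
  qed
qed

lemma cycle_edges_in_set: "(w, v) \<in> cycle_edges c \<Longrightarrow> w \<in> set c \<and> v \<in> set c"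
  by (auto simp: cycle_edges_def intro!: nth_mem mod_less_divisor)

lemma cycle_edges_succ_unique:
  "distinct c \<Longrightarrow> (w, v) \<in> cycle_edges c \<Longrightarrow> (w, v') \<in> cycle_edges c \<Longrightarrow> v = v'"
  by (auto simp: cycle_edges_def nth_eq_iff_index_eq)

lemma cycle_edges_nth_Suc: "Suc i < length c \<Longrightarrow> (c ! i, c ! Suc i) \<in> cycle_edges c"
  unfolding cycle_edges_def by (intro CollectI exI[of _ i]) simp

lemma cycle_edges_succ_exists: "w \<in> set c \<Longrightarrow> \<exists>v. (w, v) \<in> cycle_edges c"
  by (auto simp: cycle_edges_def in_set_conv_nth)

lemma cycle_edges_pred_exists:
  assumes "v \<in> set c"
  shows "\<exists>w. (w, v) \<in> cycle_edges c"
proof -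
  obtain j where j: "j < length c" "v = c ! j"
    using assms by (auto simp: in_set_conv_nth)
  define i where "i = (if j = 0 then length c - 1 else j - 1)"
  have "i < length c" "Suc i mod length c = j"
    using j by (auto simp: i_def)
  with j show ?thesis
    unfolding cycle_edges_def by blast
qed

lemma rtrancl_if_cycle_edges_subset:
  assumes "cycle_edges c \<subseteq> R" "u \<in> set c" "v \<in> set c"
  shows "(u, v) \<in> R\<^sup>*"
proof -
  have walk: "(c ! i, c ! ((i + n) mod length c)) \<in> R\<^sup>*" if "i < length c" for i n
  proof (induction n)
    case 0
    with that show ?case by simp
  next
    case (Suc n)
    let ?j = "(i + n) mod length c"
    have "?j < length c"
      using that by (intro mod_less_divisor) auto
    then have "(c ! ?j, c ! (Suc ?j mod length c)) \<in> R"
      using assms(1) unfolding cycle_edges_def by blast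
    moreover have "Suc ?j mod length c = (i + Suc n) mod length c"
      by (simp add: mod_Suc_eq)
    ultimately show ?case
      using Suc.IH by (metis rtrancl.rtrancl_into_rtrancl)
  qed
  obtain i j where ij: "i < length c" "j < length c" "u = c ! i" "v = c ! j"
    using assms(2,3) by (auto simp: in_set_conv_nth)
  have "(i + (j + length c - i)) mod length c = j"
    using ij by simp
  with walk[OF ij(1), of "j + length c - i"] ij show ?thesis
    by simp
qed

definition reverse_cycle :: "'a list \<Rightarrow> ('a \<times> 'a) set \<Rightarrow> ('a \<times> 'a) set" where
  "reverse_cycle c G =
     {(x, y) \<in> G. y \<notin> set c} \<union>
     {(x, w). \<exists>v. (w, v) \<in> cycle_edges c \<and> (x, v) \<in> G \<and> x \<noteq> w} \<union>
     (cycle_edges c)\<inverse>"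

lemma reverse_cycle_outside: "y \<notin> set c \<Longrightarrow> (x, y) \<in> reverse_cycle c G \<longleftrightarrow> (x, y) \<in> G"
  by (auto simp: reverse_cycle_def dest: cycle_edges_in_set)

lemma reverse_cycle_into:
  assumes "y \<in> set c"
  shows "(x, y) \<in> reverse_cycle c G \<longleftrightarrow>
    (\<exists>v. (y, v) \<in> cycle_edges c \<and> (x, v) \<in> G \<and> x \<noteq> y) \<or> (y, x) \<in> cycle_edges c"
  using assms unfolding reverse_cycle_def by blast

lemma family_reverse_cycle_outside: "y \<notin> set c \<Longrightarrow> family (reverse_cycle c G) y = family G y"
  by (simp add: family_def reverse_cycle_outside)

lemma family_reverse_cycle:
  assumes "is_cycle G c" "(w, v) \<in> cycle_edges c"
  shows "family (reverse_cycle c G) w = family G v"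
proof -
  have "distinct c"
    using assms(1) by (simp add: is_cycle_def)
  note succ = cycle_edges_succ_unique[OF this assms(2)]
  have "(w, v) \<in> G"
    using cycle_edges_subset[OF assms(1)] assms(2) by blast
  have "w \<in> set c"
    using cycle_edges_in_set[OF assms(2)] by simp
  have "(x, w) \<in> reverse_cycle c G \<longleftrightarrow> x = v \<or> ((x, v) \<in> G \<and> x \<noteq> w)" for x
  proof
    assume "(x, w) \<in> reverse_cycle c G"
    then consider "w \<notin> set c" | v' where "(w, v') \<in> cycle_edges c" "(x, v') \<in> G" "x \<noteq> w"
      | "(w, x) \<in> cycle_edges c"
      unfolding reverse_cycle_def by blast
    then show "x = v \<or> ((x, v) \<in> G \<and> x \<noteq> w)"
      by cases (use \<open>w \<in> set c\<close> succ in blast)+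
  next
    assume "x = v \<or> ((x, v) \<in> G \<and> x \<noteq> w)"
    with assms(2) show "(x, w) \<in> reverse_cycle c G"
      unfolding reverse_cycle_def by blast
  qed
  with \<open>(w, v) \<in> G\<close> show ?thesis
    unfolding family_def by blast
qed

lemma dcg_reverse_cycle:
  assumes "dcg V G" "is_cycle G c"
  shows "dcg V (reverse_cycle c G)"
  using assms(1) cycle_edges_subset[OF assms(2)] by (auto simp: dcg_def reverse_cycle_def)

lemma reverse_cycle_subset_rtrancl:
  assumes "is_cycle G c"
  shows "reverse_cycle c G \<subseteq> G\<^sup>*"
proof (rule subrelI)
  note conn = rtrancl_if_cycle_edges_subset[OF cycle_edges_subset[OF assms]]
  fix x y
  assume "(x, y) \<in> reverse_cycle c G"
  then consider "(x, y) \<in> G" | v where "(y, v) \<in> cycle_edges c" "(x, v) \<in> G"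
    | "(y, x) \<in> cycle_edges c"
    unfolding reverse_cycle_def by blast
  then show "(x, y) \<in> G\<^sup>*"
  proof cases
    case 1
    then show ?thesis
      by (rule r_into_rtrancl)
  next
    case 2
    then have "(v, y) \<in> G\<^sup>*"
      using cycle_edges_in_set[OF 2(1)] by (intro conn) auto
    with 2(2) show ?thesis
      by (rule converse_rtrancl_into_rtrancl)
  next
    case 3
    then show ?thesis
      using cycle_edges_in_set[OF 3] by (intro conn) auto
  qed
qed

lemma subset_rtrancl_reverse_cycle:
  assumes "is_cycle G c"
  shows "G \<subseteq> (reverse_cycle c G)\<^sup>*"
proof (rule subrelI)
  let ?F = "reverse_cycle c G"
  have conn: "(u, v) \<in> ?F\<^sup>*" if "u \<in> set c" "v \<in> set c" for u v
  proof -
    have "cycle_edges c \<subseteq> ?F\<inverse>"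
      by (auto simp: reverse_cycle_def)
    from rtrancl_if_cycle_edges_subset[OF this that(2,1)] show ?thesis
      by (simp add: rtrancl_converse)
  qed
  fix x y
  assume "(x, y) \<in> G"
  show "(x, y) \<in> ?F\<^sup>*"
  proof (cases "y \<in> set c")
    case False
    with \<open>(x, y) \<in> G\<close> have "(x, y) \<in> ?F"
      by (simp add: reverse_cycle_outside)
    then show ?thesis
      by (rule r_into_rtrancl)
  next
    case True
    then obtain w where w: "(w, y) \<in> cycle_edges c"
      by (blast dest: cycle_edges_pred_exists)
    have "(w, y) \<in> ?F\<^sup>*"
      using cycle_edges_in_set[OF w] by (intro conn) auto
    show ?thesis
    proof (cases "x = w")
      case True
      with \<open>(w, y) \<in> ?F\<^sup>*\<close> show ?thesis
        by simp
    next
      case False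
      with w \<open>(x, y) \<in> G\<close> have "(x, w) \<in> ?F"
        unfolding reverse_cycle_def by blast
      from this \<open>(w, y) \<in> ?F\<^sup>*\<close> show ?thesis
        by (rule converse_rtrancl_into_rtrancl)
    qed
  qed
qed

lemma rtrancl_reverse_cycle: "is_cycle G c \<Longrightarrow> (reverse_cycle c G)\<^sup>* = G\<^sup>*"
  by (intro subset_antisym rtrancl_subset_rtrancl reverse_cycle_subset_rtrancl
      subset_rtrancl_reverse_cycle)

lemma markov_equiv_reverse_cycle:
  assumes "dcg V G" "is_cycle G c"
  shows "markov_equiv V G (reverse_cycle c G)"
proof (rule markov_equiv_if_families_correspond[where S = "set c"])
  show "dcg V G" "dcg V (reverse_cycle c G)"
    using assms dcg_reverse_cycle by blast+
  show "\<forall>y. y \<notin> set c \<longrightarrow> family (reverse_cycle c G) y = family G y"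
    by (simp add: family_reverse_cycle_outside)
  show "\<forall>y\<in>set c. \<exists>y'\<in>set c. family G y \<subseteq> family (reverse_cycle c G) y'"
    using cycle_edges_pred_exists cycle_edges_in_set family_reverse_cycle[OF assms(2)]
    by (metis order_refl)
  show "\<forall>y\<in>set c. \<exists>y'\<in>set c. family (reverse_cycle c G) y \<subseteq> family G y'"
    using cycle_edges_succ_exists cycle_edges_in_set family_reverse_cycle[OF assms(2)]
    by (metis order_refl)
  show "\<forall>u\<in>set c. \<forall>v\<in>set c. (u, v) \<in> G\<^sup>*"
    using rtrancl_if_cycle_edges_subset[OF cycle_edges_subset[OF assms(2)]] by blast
  show "(reverse_cycle c G)\<^sup>* = G\<^sup>*"
    by (rule rtrancl_reverse_cycle[OF assms(2)])
qed

lemma rtrancl_delete_reverse_edge: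
  assumes "is_cycle G c" "length c \<ge> 3"
  shows "(G - {(c ! 1, c ! 0)})\<^sup>* = G\<^sup>*"
proof -
  let ?F = "G - {(c ! 1, c ! 0)}"
  have "distinct c"
    using assms(1) by (simp add: is_cycle_def)
  have e12: "(c ! 1, c ! 2) \<in> cycle_edges c"
    using cycle_edges_nth_Suc[of 1 c] assms(2) by (simp add: numeral_2_eq_2)
  have "2 < length c" "0 < length c"
    using assms(2) by linarith+
  then have "c ! 2 \<noteq> c ! 0"
    using nth_eq_iff_index_eq[OF \<open>distinct c\<close>] by fastforce
  then have "(c ! 1, c ! 0) \<notin> cycle_edges c"
    using cycle_edges_succ_unique[OF \<open>distinct c\<close> e12] by blast
  then have "cycle_edges c \<subseteq> ?F"
    using cycle_edges_subset[OF assms(1)] by blast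
  then have "(c ! 1, c ! 0) \<in> ?F\<^sup>*"
    by (rule rtrancl_if_cycle_edges_subset) (rule nth_mem, use \<open>2 < length c\<close> in linarith)+
  then have "G \<subseteq> ?F\<^sup>*"
    by blast
  then show ?thesis
    by (metis Diff_subset rtrancl_mono rtrancl_subset_rtrancl subset_antisym)
qed

lemma markov_equiv_delete_reverse_edge:
  assumes "dcg V G" "is_cycle G c" "length c \<ge> 3" "reverse_cycle c G = G"
  shows "(c ! 1, c ! 0) \<in> G" "markov_equiv V G (G - {(c ! 1, c ! 0)})"
proof -
  let ?F = "G - {(c ! 1, c ! 0)}"
  have "distinct c"
    using assms(2) by (simp add: is_cycle_def)
  moreover have "1 < length c" "0 < length c"
    using assms(3) by linarith+
  ultimately have "c ! 1 \<noteq> c ! 0"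
    using nth_eq_iff_index_eq by fastforce
  have e01: "(c ! 0, c ! 1) \<in> cycle_edges c"
    using cycle_edges_nth_Suc[of 0 c] assms(3) by simp
  show back_edge: "(c ! 1, c ! 0) \<in> G"
    using assms(4) e01 unfolding reverse_cycle_def by blast
  have same_family: "family G (c ! 0) = family G (c ! 1)"
    using family_reverse_cycle[OF assms(2) e01] assms(4) by simp
  show "markov_equiv V G ?F"
  proof (rule markov_equiv_if_families_correspond[where S = "{c ! 0, c ! 1}"])
    show "dcg V G" "dcg V ?F"
      using assms(1) by (auto simp: dcg_def)
    show "\<forall>y. y \<notin> {c ! 0, c ! 1} \<longrightarrow> family ?F y = family G y"
      by (auto simp: family_def)
    show "\<forall>y\<in>{c ! 0, c ! 1}. \<exists>y'\<in>{c ! 0, c ! 1}. family G y \<subseteq> family ?F y'"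
      using same_family \<open>c ! 1 \<noteq> c ! 0\<close> e01 cycle_edges_subset[OF assms(2)]
      by (auto simp: family_def)
    show "\<forall>y\<in>{c ! 0, c ! 1}. \<exists>y'\<in>{c ! 0, c ! 1}. family ?F y \<subseteq> family G y'"
      by (auto simp: family_def)
    show "\<forall>u\<in>{c ! 0, c ! 1}. \<forall>v\<in>{c ! 0, c ! 1}. (u, v) \<in> G\<^sup>*"
      using back_edge e01 cycle_edges_subset[OF assms(2)] by blast
    show "?F\<^sup>* = G\<^sup>*"
      by (rule rtrancl_delete_reverse_edge[OF assms(2,3)])
  qed
qed

section \<open>Flipping disjoint cycles\<close>

definition flip_cycle :: "'a list \<Rightarrow> ('a \<times> 'a) set \<Rightarrow> ('a \<times> 'a) set" where
  "flip_cycle c G = (if reverse_cycle c G = G then G - {(c ! 1, c ! 0)} else reverse_cycle c G)"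

lemma flip_cycle_mem_MEC_neq:
  assumes "dcg V G" "is_cycle G c" "length c \<ge> 3"
  shows "flip_cycle c G \<in> MEC V G \<and> flip_cycle c G \<noteq> G"
proof (cases "reverse_cycle c G = G")
  case True
  then show ?thesis
    using markov_equiv_delete_reverse_edge[OF assms True] assms(1)
    by (auto simp: flip_cycle_def MEC_def dcg_def)
next
  case False
  then show ?thesis
    using dcg_reverse_cycle[OF assms(1,2)] markov_equiv_reverse_cycle[OF assms(1,2)]
    by (simp add: flip_cycle_def MEC_def)
qed

definition same_edges_into :: "'a set \<Rightarrow> ('a \<times> 'a) set \<Rightarrow> ('a \<times> 'a) set \<Rightarrow> bool" where
  "same_edges_into S G G' \<longleftrightarrow> (\<forall>x. \<forall>y\<in>S. (x, y) \<in> G \<longleftrightarrow> (x, y) \<in> G')"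

lemma eq_iff_same_edges_into:
  assumes "\<forall>x y. y \<notin> S \<longrightarrow> ((x, y) \<in> G \<longleftrightarrow> (x, y) \<in> G')"
  shows "G = G' \<longleftrightarrow> same_edges_into S G G'"
proof
  assume "same_edges_into S G G'"
  with assms have "(x, y) \<in> G \<longleftrightarrow> (x, y) \<in> G'" for x y
    unfolding same_edges_into_def by blast
  then show "G = G'"
    by auto
qed (simp add: same_edges_into_def)

lemma is_cycle_cong:
  assumes "is_cycle G c" "same_edges_into (set c) G G'"
  shows "is_cycle G' c"
proof -
  have "c \<noteq> []"
    using assms(1) by (simp add: is_cycle_def)
  have "(c ! i, c ! Suc i) \<in> G'" if "Suc i < length c" for i
    using assms that nth_mem[OF that] unfolding is_cycle_def same_edges_into_def by blast
  moreover have "(last c, hd c) \<in> G'"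
    using assms hd_in_set[OF \<open>c \<noteq> []\<close>] unfolding is_cycle_def same_edges_into_def by blast
  ultimately show ?thesis
    using assms(1) by (simp add: is_cycle_def)
qed

lemma flip_cycle_outside:
  assumes "c \<noteq> []" "y \<notin> set c"
  shows "(x, y) \<in> flip_cycle c G \<longleftrightarrow> (x, y) \<in> G"
proof -
  have "y \<noteq> c ! 0"
    using assms by auto
  with assms(2) show ?thesis
    by (simp add: flip_cycle_def reverse_cycle_outside)
qed

lemma flip_cycle_cong:
  assumes "c \<noteq> []" "same_edges_into (set c) G G'"
  shows "same_edges_into (set c) (flip_cycle c G) (flip_cycle c G')"
proof -
  have reverse: "same_edges_into (set c) (reverse_cycle c G) (reverse_cycle c G')"
    unfolding same_edges_into_def
  proof (intro allI ballI)
    fix x y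
    assume "y \<in> set c"
    have "(\<exists>v. (y, v) \<in> cycle_edges c \<and> (x, v) \<in> G \<and> x \<noteq> y) \<longleftrightarrow>
          (\<exists>v. (y, v) \<in> cycle_edges c \<and> (x, v) \<in> G' \<and> x \<noteq> y)"
      using assms(2) cycle_edges_in_set unfolding same_edges_into_def by meson
    then show "(x, y) \<in> reverse_cycle c G \<longleftrightarrow> (x, y) \<in> reverse_cycle c G'"
      by (simp add: reverse_cycle_into[OF \<open>y \<in> set c\<close>])
  qed
  have fixed_iff: "reverse_cycle c H = H \<longleftrightarrow> same_edges_into (set c) (reverse_cycle c H) H" for H
    by (rule eq_iff_same_edges_into) (simp add: reverse_cycle_outside)
  have "same_edges_into (set c) (reverse_cycle c G) G \<longleftrightarrow>
        same_edges_into (set c) (reverse_cycle c G') G'"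
    using reverse assms(2) unfolding same_edges_into_def by blast
  then have same_case: "reverse_cycle c G = G \<longleftrightarrow> reverse_cycle c G' = G'"
    by (simp only: fixed_iff)
  show ?thesis
  proof (cases "reverse_cycle c G = G")
    case True
    with same_case assms(2) show ?thesis
      by (simp add: flip_cycle_def same_edges_into_def)
  next
    case False
    with same_case reverse show ?thesis
      by (simp add: flip_cycle_def)
  qed
qed

lemma markov_equiv_trans:
  "markov_equiv V G G' \<Longrightarrow> markov_equiv V G' G'' \<Longrightarrow> markov_equiv V G G''"
  unfolding markov_equiv_def by blast

definition flip_cycles :: "'a list list \<Rightarrow> ('a \<times> 'a) set \<Rightarrow> nat set \<Rightarrow> ('a \<times> 'a) set" where
  "flip_cycles cs E T =
     {(x, y) \<in> E. \<forall>i\<in>T. y \<notin> set (cs ! i)} \<union>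
     (\<Union>i\<in>T. {(x, y) \<in> flip_cycle (cs ! i) E. y \<in> set (cs ! i)})"

context
  fixes V :: "'a set" and E :: "('a \<times> 'a) set" and cs :: "'a list list"
  assumes dcg_E: "dcg V E"
    and cycles: "\<forall>c\<in>set cs. is_cycle E c \<and> length c \<ge> 3"
    and disjoint: "\<forall>i<length cs. \<forall>j<length cs. i \<noteq> j \<longrightarrow> set (cs ! i) \<inter> set (cs ! j) = {}"
begin

lemma flip_cycles_into_cycle:
  assumes "T \<subseteq> {..<length cs}" "i < length cs" "y \<in> set (cs ! i)"
  shows "(x, y) \<in> flip_cycles cs E T \<longleftrightarrow>
    (if i \<in> T then (x, y) \<in> flip_cycle (cs ! i) E else (x, y) \<in> E)"
proof -
  have "y \<notin> set (cs ! j)" if "j \<in> T" "j \<noteq> i" for j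
    using disjoint assms that by blast
  with assms(3) show ?thesis
    unfolding flip_cycles_def by auto
qed

lemma flip_cycles_insert:
  assumes T: "T \<subseteq> {..<length cs}" and i: "i < length cs" "i \<notin> T"
  shows "flip_cycle (cs ! i) (flip_cycles cs E T) = flip_cycles cs E (insert i T)"
proof -
  have "cs ! i \<noteq> []"
    using cycles i(1) by (fastforce simp: is_cycle_def)
  have "same_edges_into (set (cs ! i)) (flip_cycles cs E T) E"
    using flip_cycles_into_cycle[OF T i(1)] i(2) unfolding same_edges_into_def by simp
  then have into: "same_edges_into (set (cs ! i)) (flip_cycle (cs ! i) (flip_cycles cs E T))
                     (flip_cycle (cs ! i) E)"
    by (rule flip_cycle_cong[OF \<open>cs ! i \<noteq> []\<close>])
  have T': "insert i T \<subseteq> {..<length cs}"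
    using T i by simp
  show ?thesis
  proof (rule set_eqI, clarify)
    fix x y
    show "(x, y) \<in> flip_cycle (cs ! i) (flip_cycles cs E T) \<longleftrightarrow>
          (x, y) \<in> flip_cycles cs E (insert i T)"
    proof (cases "y \<in> set (cs ! i)")
      case True
      with into flip_cycles_into_cycle[OF T' i(1) True] show ?thesis
        unfolding same_edges_into_def by simp
    next
      case False
      then show ?thesis
        by (simp add: flip_cycle_outside[OF \<open>cs ! i \<noteq> []\<close>] flip_cycles_def)
    qed
  qed
qed

lemma flip_cycles_mem_MEC:
  assumes "T \<subseteq> {..<length cs}"
  shows "flip_cycles cs E T \<in> MEC V E"
proof -
  have "finite T"
    using assms finite_subset by blast
  from this assms show ?thesis
  proof (induction rule: finite_subset_induct')
    case empty
    have "flip_cycles cs E {} = E"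
      by (auto simp: flip_cycles_def)
    with dcg_E show ?case
      by (simp add: MEC_def markov_equiv_def)
  next
    case (insert i T)
    let ?G = "flip_cycles cs E T"
    have T: "T \<subseteq> {..<length cs}" and i: "i < length cs"
      using insert.hyps(2,3) by auto
    have cycle: "is_cycle E (cs ! i)" "length (cs ! i) \<ge> 3"
      using cycles i by auto
    have "same_edges_into (set (cs ! i)) E ?G"
      using flip_cycles_into_cycle[OF T i] insert.hyps(4) unfolding same_edges_into_def by simp
    with cycle(1) have "is_cycle ?G (cs ! i)"
      by (rule is_cycle_cong)
    moreover have "dcg V ?G" "markov_equiv V E ?G"
      using insert.IH T by (simp_all add: MEC_def)
    ultimately have "flip_cycle (cs ! i) ?G \<in> MEC V ?G"
      using flip_cycle_mem_MEC_neq cycle(2) by blast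
    then show ?case
      using flip_cycles_insert[OF T i insert.hyps(4)] markov_equiv_trans[OF \<open>markov_equiv V E ?G\<close>]
      by (simp add: MEC_def)
  qed
qed

lemma inj_on_flip_cycles: "inj_on (flip_cycles cs E) (Pow {..<length cs})"
proof (rule inj_onI, rule ccontr)
  fix T T'
  assume T: "T \<in> Pow {..<length cs}" and T': "T' \<in> Pow {..<length cs}"
    and eq: "flip_cycles cs E T = flip_cycles cs E T'" and "T \<noteq> T'"
  then obtain i where i: "i \<in> T \<longleftrightarrow> i \<notin> T'" "i < length cs"
    by blast
  have cycle: "is_cycle E (cs ! i)" "length (cs ! i) \<ge> 3"
    using cycles i(2) by auto
  then have "cs ! i \<noteq> []"
    by auto
  have "flip_cycle (cs ! i) E \<noteq> E"
    using flip_cycle_mem_MEC_neq[OF dcg_E cycle] by blast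
  then have "\<not> same_edges_into (set (cs ! i)) (flip_cycle (cs ! i) E) E"
    using eq_iff_same_edges_into flip_cycle_outside[OF \<open>cs ! i \<noteq> []\<close>] by metis
  moreover have "same_edges_into (set (cs ! i)) (flip_cycles cs E T) (flip_cycles cs E T')"
    using eq by (simp add: same_edges_into_def)
  ultimately show False
    using i flip_cycles_into_cycle[of T i] flip_cycles_into_cycle[of T' i] T T'
    unfolding same_edges_into_def by auto
qed

end

lemma finite_MEC: "finite V \<Longrightarrow> finite (MEC V E)"
  by (rule finite_subset[of _ "Pow (V \<times> V)"]) (auto simp: MEC_def dcg_def)

theorem mainTheorem13:
  fixes V :: "'a set" and E :: "('a \<times> 'a) set" and cs :: "'a list list" and k :: nat
  assumes "dcg V E"
    and "length cs = k"
    and "\<forall>c \<in> set cs. is_cycle E c \<and> length c \<ge> 3"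
    and "\<forall>i < k. \<forall>j < k. i \<noteq> j \<longrightarrow> set (cs ! i) \<inter> set (cs ! j) = {}"
  shows "card (MEC V E) \<ge> 2 ^ k"
proof -
  note flips = flip_cycles_mem_MEC[OF assms(1,3)] inj_on_flip_cycles[OF assms(1,3)]
  have "card (flip_cycles cs E ` Pow {..<k}) = 2 ^ k"
    using flips(2) assms(2,4) by (simp add: card_image card_Pow)
  moreover have "flip_cycles cs E ` Pow {..<k} \<subseteq> MEC V E"
    using flips(1) assms(2,4) by auto
  moreover have "finite (MEC V E)"
    using assms(1) finite_MEC by (auto simp: dcg_def)
  ultimately show ?thesis
    by (metis card_mono)
qed

end
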